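(* Let $P$ be a profile of linear orders on a finite set $A$ which is single-crossing with respect to some tree on its voter set. Then every subprofile of $P$ is single-crossing with respect to some tree on its own voter set if and only if $P$ is single-crossing with respect to a line (a path graph on the voter set).
   Context: A profile assigns a linear order on $A$ to each voter in a finite voter set; a subprofile is the restriction of the profile to a nonempty subset of voters. Voter $i$ prefers $a$ to $b$ is written $a\succ_i b$. Given a tree $T=(V,E)$ on the voter set, the profile is single-crossing with respect to $T$ if for every pair of distinct alternatives $a,b$ one of the following holds: (i) there is an edge $e\in E$ such that, removing $e$ from $T$, the two resulting subtrees have vertex sets $V_1,V_2$ with all voters in $V_1$ preferring $a$ to $b$ and all voters in $V_2$ preferring $b$ to $a$; or (ii) all voters prefer $a$ to $b$, or all voters prefer $b$ to $a$. *)

theory Defs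
  imports Main
begin

(* A profile on voter set V over alternatives A: P i a b means "a \<succ>_i b".
   Each voter's preference is a (strict) linear order on A. *)
definition is_profile :: "'v set \<Rightarrow> 'a set \<Rightarrow> ('v \<Rightarrow> 'a \<Rightarrow> 'a \<Rightarrow> bool) \<Rightarrow> bool" where
  "is_profile V A P \<longleftrightarrow>
     (\<forall>i\<in>V. (\<forall>a\<in>A. \<not> P i a a)
           \<and> (\<forall>a\<in>A. \<forall>b\<in>A. \<forall>c\<in>A. P i a b \<longrightarrow> P i b c \<longrightarrow> P i a c)
           \<and> (\<forall>a\<in>A. \<forall>b\<in>A. a \<noteq> b \<longrightarrow> P i a b \<or> P i b a))"

definition adj :: "'v set set \<Rightarrow> ('v \<times> 'v) set" where
  "adj E = {(u, w). {u, w} \<in> E}"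

definition graph_on :: "'v set \<Rightarrow> 'v set set \<Rightarrow> bool" where
  "graph_on V E \<longleftrightarrow> (\<forall>e\<in>E. e \<subseteq> V \<and> card e = 2)"

definition connected_graph :: "'v set \<Rightarrow> 'v set set \<Rightarrow> bool" where
  "connected_graph V E \<longleftrightarrow> (\<forall>u\<in>V. \<forall>w\<in>V. (u, w) \<in> (adj E)\<^sup>*)"

definition is_tree :: "'v set \<Rightarrow> 'v set set \<Rightarrow> bool" where
  "is_tree V E \<longleftrightarrow> graph_on V E \<and> connected_graph V E
     \<and> (\<forall>u w. {u, w} \<in> E \<longrightarrow> (u, w) \<notin> (adj (E - {{u, w}}))\<^sup>*)"

definition is_line :: "'v set \<Rightarrow> 'v set set \<Rightarrow> bool" where
  "is_line V E \<longleftrightarrow> (\<exists>f n. bij_betw f {..<n} V \<and> E = {{f j, f (Suc j)} | j. Suc j < n})"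

definition side :: "'v set set \<Rightarrow> 'v set \<Rightarrow> 'v \<Rightarrow> 'v set" where
  "side E e u = {x. (u, x) \<in> (adj (E - {e}))\<^sup>*}"

definition single_crossing_wrt :: "'v set \<Rightarrow> 'a set \<Rightarrow> ('v \<Rightarrow> 'a \<Rightarrow> 'a \<Rightarrow> bool) \<Rightarrow> 'v set set \<Rightarrow> bool" where
  "single_crossing_wrt V A P E \<longleftrightarrow>
     (\<forall>a\<in>A. \<forall>b\<in>A. a \<noteq> b \<longrightarrow>
        (\<exists>u w. {u, w} \<in> E
            \<and> (\<forall>i\<in>side E {u, w} u. P i a b)
            \<and> (\<forall>i\<in>side E {u, w} w. P i b a))
        \<or> (\<forall>i\<in>V. P i a b) \<or> (\<forall>i\<in>V. P i b a))"

definition single_crossing_tree :: "'v set \<Rightarrow> 'a set \<Rightarrow> ('v \<Rightarrow> 'a \<Rightarrow> 'a \<Rightarrow> bool) \<Rightarrow> bool" where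
  "single_crossing_tree V A P \<longleftrightarrow> (\<exists>E. is_tree V E \<and> single_crossing_wrt V A P E)"

definition single_crossing_line :: "'v set \<Rightarrow> 'a set \<Rightarrow> ('v \<Rightarrow> 'a \<Rightarrow> 'a \<Rightarrow> bool) \<Rightarrow> bool" where
  "single_crossing_line V A P \<longleftrightarrow> (\<exists>E. is_line V E \<and> single_crossing_wrt V A P E)"

end

theory Submission
  imports Defs
begin

(*
  Voter y lies between x and z when it agrees with every pairwise comparison on which x and z
  agree; for linear orders this says that the set of ordered pairs on which x and y disagree is
  contained in the one for x and z. If all subprofiles are single-crossing on trees, then among
  any three voters one lies between the other two, since otherwise all three would be leaves of
  a three-vertex tree. A single-crossing tree also excludes a "square" (two pairs of alternatives
  splitting four voters in crossing ways), because the sides of two tree edges never cross.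
  Take v, w at maximal disagreement: every voter lies between them, and the absence of squares
  forces the disagreement sets seen from v to form a chain. Ordering the voters along that chain
  gives a line along which each pair of alternatives switches at most once. Conversely, the
  order of a single-crossing line restricts to any subset of voters.
*)

section \<open>Sides of tree edges\<close>

lemma sym_adj: "sym (adj E)"
  by (auto simp: adj_def sym_def insert_commute)

lemma adj_rtrancl_sym: "(x, y) \<in> (adj E)\<^sup>* \<Longrightarrow> (y, x) \<in> (adj E)\<^sup>*"
  using sym_rtrancl[OF sym_adj] by (rule symD)

lemma adj_rtrancl_mono: "E \<subseteq> E' \<Longrightarrow> (x, y) \<in> (adj E)\<^sup>* \<Longrightarrow> (x, y) \<in> (adj E')\<^sup>*"
  by (rule subsetD[OF rtrancl_mono, rotated]) (auto simp: adj_def)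

lemma graph_on_edgeD:
  assumes "graph_on V E" "{u, w} \<in> E"
  shows "u \<in> V" "w \<in> V" "u \<noteq> w"
  using assms by (auto simp: graph_on_def)

lemma graph_on_edge_through:
  assumes "graph_on V E" "e \<in> E" "y \<in> e"
  obtains t where "e = {y, t}" "t \<noteq> y"
proof -
  obtain s t where "e = {s, t}" "s \<noteq> t"
    using assms unfolding graph_on_def by (meson card_2_iff)
  with assms(3) that show ?thesis by (auto simp: insert_commute)
qed

lemma side_self: "u \<in> side E e u"
  by (simp add: side_def)

lemma side_subset:
  assumes "graph_on V E" "u \<in> V"
  shows "side E e u \<subseteq> V"
proof
  fix x assume "x \<in> side E e u"
  then have "(u, x) \<in> (adj (E - {e}))\<^sup>*" by (simp add: side_def)
  then show "x \<in> V"
    by (induction rule: rtrancl_induct) (use assms in \<open>auto simp: adj_def graph_on_def\<close>)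
qed

lemma side_cover:
  assumes "connected_graph V E" "{u, w} \<in> E" "u \<in> V" "x \<in> V"
  shows "x \<in> side E {u, w} u \<or> x \<in> side E {u, w} w"
proof -
  have "(u, x) \<in> (adj E)\<^sup>*"
    using assms unfolding connected_graph_def by blast
  then show ?thesis
  proof (induction rule: rtrancl_induct)
    case base
    then show ?case by (simp add: side_self)
  next
    case (step y z)
    show ?case
    proof (cases "{y, z} = {u, w}")
      case True
      then have "z = u \<or> z = w" by (metis doubleton_eq_iff)
      then show ?thesis using side_self[of u E "{u, w}"] side_self[of w E "{u, w}"] by blast
    next
      case False
      then have "(y, z) \<in> adj (E - {{u, w}})"
        using step.hyps(2) by (simp add: adj_def)
      then have "z \<in> side E {u, w} r" if "y \<in> side E {u, w} r" for r
        using that unfolding side_def by (simp add: rtrancl.rtrancl_into_rtrancl)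
      then show ?thesis
        using step.IH by blast
    qed
  qed
qed

lemma side_disjoint:
  assumes "is_tree V E" "{u, w} \<in> E"
  shows "side E {u, w} u \<inter> side E {u, w} w = {}"
proof -
  have "(u, w) \<notin> (adj (E - {{u, w}}))\<^sup>*"
    using assms unfolding is_tree_def by blast
  moreover have "(u, w) \<in> (adj (E - {{u, w}}))\<^sup>*"
    if "(u, x) \<in> (adj (E - {{u, w}}))\<^sup>*" "(w, x) \<in> (adj (E - {{u, w}}))\<^sup>*" for x
    using rtrancl_trans[OF that(1) adj_rtrancl_sym[OF that(2)]] .
  ultimately show ?thesis
    unfolding side_def by blast
qed

lemma tree_side_complement:
  assumes "is_tree V E" "{u, w} \<in> E"
  shows "side E {u, w} w = V - side E {u, w} u"
proof -
  have V: "graph_on V E" "connected_graph V E"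
    using assms(1) unfolding is_tree_def by auto
  have "u \<in> V" "w \<in> V"
    using graph_on_edgeD[OF V(1) assms(2)] by auto
  have "V \<subseteq> side E {u, w} u \<union> side E {u, w} w"
    using side_cover[OF V(2) assms(2) \<open>u \<in> V\<close>] by blast
  moreover have "side E {u, w} w \<subseteq> V"
    using side_subset[OF V(1) \<open>w \<in> V\<close>] .
  ultimately show ?thesis
    using side_disjoint[OF assms] by blast
qed

lemma tree_side_nested:
  assumes T: "is_tree V E" and e: "{u, w} \<in> E" and e': "{s, t} \<in> E" and ne: "{u, w} \<noteq> {s, t}"
    and ut: "u \<in> side E {s, t} t" and wt: "w \<in> side E {s, t} t"
    and sz: "s \<in> side E {u, w} z"
  shows "side E {s, t} s \<subseteq> side E {u, w} z"
proof
  fix x assume "x \<in> side E {s, t} s"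
  then have "(s, x) \<in> (adj (E - {{s, t}}))\<^sup>*" by (simp add: side_def)
  then have "(s, x) \<in> (adj (E - {{s, t}} - {{u, w}}))\<^sup>*"
  proof (induction rule: rtrancl_induct)
    case base
    then show ?case by simp
  next
    case (step y x)
    show ?case
    proof (cases "{y, x} = {u, w}")
      case True
      \<comment> \<open>then s would reach t without the edge {s, t}, through u or w\<close>
      then have "(t, y) \<in> (adj (E - {{s, t}}))\<^sup>*"
        using ut wt by (auto simp: side_def doubleton_eq_iff)
      moreover have "(s, y) \<in> (adj (E - {{s, t}}))\<^sup>*"
        using adj_rtrancl_mono[OF _ step.IH] by blast
      ultimately have "(s, t) \<in> (adj (E - {{s, t}}))\<^sup>*"
        by (meson adj_rtrancl_sym rtrancl_trans)
      then show ?thesis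
        using T e' unfolding is_tree_def by blast
    next
      case False
      then have "(y, x) \<in> adj (E - {{s, t}} - {{u, w}})"
        using step.hyps(2) by (simp add: adj_def)
      with step.IH show ?thesis by (rule rtrancl.rtrancl_into_rtrancl)
    qed
  qed
  then have "(s, x) \<in> (adj (E - {{u, w}}))\<^sup>*"
    by (rule adj_rtrancl_mono[rotated]) blast
  with sz show "x \<in> side E {u, w} z"
    unfolding side_def by (simp add: rtrancl_trans)
qed

lemma tree_sides_cross_free:
  assumes T: "is_tree V E" and e: "{u, w} \<in> E" and e': "{u', w'} \<in> E"
  shows "\<exists>r\<in>{u, w}. \<exists>r'\<in>{u', w'}. side E {u, w} r \<inter> side E {u', w'} r' = {}"
proof (cases "{u, w} = {u', w'}")
  case True
  then have "w \<in> {u', w'}" by blast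
  with True show ?thesis
    using side_disjoint[OF T e] by (metis insertI1)
next
  case False
  have V: "graph_on V E" "connected_graph V E"
    using T unfolding is_tree_def by auto
  have "u \<in> V" "u' \<in> V" "w' \<in> V"
    using graph_on_edgeD[OF V(1)] e e' by blast+
  obtain s t where st: "{u', w'} = {s, t}" "u \<in> side E {s, t} t"
    using side_cover[OF V(2) e' \<open>u' \<in> V\<close> \<open>u \<in> V\<close>] by (metis insert_commute)
  have "(u, w) \<in> adj (E - {{s, t}})"
    using e False st(1) by (simp add: adj_def)
  then have "w \<in> side E {s, t} t"
    using st(2) unfolding side_def by (simp add: rtrancl.rtrancl_into_rtrancl)
  have "s \<in> V"
    using st(1) \<open>u' \<in> V\<close> \<open>w' \<in> V\<close> by (metis doubleton_eq_iff)
  obtain z z' where zz: "{u, w} = {z, z'}" "s \<in> side E {u, w} z"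
    using side_cover[OF V(2) e \<open>u \<in> V\<close> \<open>s \<in> V\<close>] by (metis insert_commute)
  have "side E {s, t} s \<subseteq> side E {u, w} z"
    using tree_side_nested[OF T e] e' st \<open>w \<in> side E {s, t} t\<close> zz(2) False by simp
  moreover have "side E {u, w} z \<inter> side E {u, w} z' = {}"
    using side_disjoint[OF T, of z z'] e zz(1) by simp
  ultimately have "side E {u, w} z' \<inter> side E {u', w'} s = {}"
    using st(1) by auto
  moreover have "z' \<in> {u, w}" "s \<in> {u', w'}"
    using zz(1) st(1) by auto
  ultimately show ?thesis by blast
qed

lemma leaf_edge_unique:
  assumes "graph_on V E" "e \<in> E" "y \<in> e" "side E e y = {y}" "e' \<in> E" "y \<in> e'"
  shows "e' = e"
proof (rule ccontr)
  assume "e' \<noteq> e"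
  obtain t where "e' = {y, t}" "t \<noteq> y"
    using graph_on_edge_through[OF assms(1,5,6)] .
  with \<open>e' \<noteq> e\<close> assms(5) have "(y, t) \<in> adj (E - {e})"
    by (simp add: adj_def)
  then have "t \<in> side E e y"
    by (simp add: side_def)
  with assms(4) \<open>t \<noteq> y\<close> show False by simp
qed

lemma tree_all_leaves_card:
  assumes T: "is_tree V E" and "x \<in> V" and leaves: "\<forall>v\<in>V. \<exists>e\<in>E. v \<in> e \<and> side E e v = {v}"
  shows "card V \<le> 2"
proof -
  have V: "graph_on V E" "connected_graph V E"
    using T unfolding is_tree_def by auto
  obtain e where e: "e \<in> E" "x \<in> e" "side E e x = {x}"
    using leaves \<open>x \<in> V\<close> by blast
  obtain y where y: "e = {x, y}" "y \<noteq> x"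
    using graph_on_edge_through[OF V(1) e(1,2)] .
  have "y \<in> V"
    using graph_on_edgeD[OF V(1)] e(1) y(1) by blast
  then obtain e' where e': "e' \<in> E" "y \<in> e'" "side E e' y = {y}"
    using leaves by blast
  have "e = e'"
    using leaf_edge_unique[OF V(1) e'] e(1) y(1) by simp
  then have "V \<subseteq> {x, y}"
    using side_cover[OF V(2), of x y] e e' y(1) \<open>x \<in> V\<close> by auto
  then show ?thesis
    using card_mono[of "{x, y}" V] y(2) by simp
qed

section \<open>Single-crossing profiles on trees\<close>

lemma profile_irrefl: "is_profile V A P \<Longrightarrow> i \<in> V \<Longrightarrow> a \<in> A \<Longrightarrow> \<not> P i a a"
  unfolding is_profile_def by blast

lemma profile_flip:
  "is_profile V A P \<Longrightarrow> i \<in> V \<Longrightarrow> a \<in> A \<Longrightarrow> b \<in> A \<Longrightarrow> a \<noteq> b \<Longrightarrow> P i b a \<longleftrightarrow> \<not> P i a b"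
  unfolding is_profile_def by blast

lemma is_profile_subset: "is_profile V A P \<Longrightarrow> U \<subseteq> V \<Longrightarrow> is_profile U A P"
  unfolding is_profile_def by blast

definition between :: "'a set \<Rightarrow> ('v \<Rightarrow> 'a \<Rightarrow> 'a \<Rightarrow> bool) \<Rightarrow> 'v \<Rightarrow> 'v \<Rightarrow> 'v \<Rightarrow> bool" where
  "between A P x y z \<longleftrightarrow> (\<forall>a\<in>A. \<forall>b\<in>A. P x a b \<and> P z a b \<longrightarrow> P y a b)"

lemma single_crossing_split_edge:
  assumes T: "is_tree V E" and SC: "single_crossing_wrt V A P E" and PR: "is_profile V A P"
    and ab: "a \<in> A" "b \<in> A" and i: "i \<in> V" "P i a b" and j: "j \<in> V" "\<not> P j a b"
  obtains u w where "{u, w} \<in> E" "\<forall>x\<in>V. x \<in> side E {u, w} u \<longleftrightarrow> P x a b"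
    "\<forall>x\<in>V. x \<in> side E {u, w} w \<longleftrightarrow> \<not> P x a b"
proof -
  have "a \<noteq> b"
    using profile_irrefl[OF PR i(1) ab(1)] i(2) by blast
  then have flip: "\<forall>x\<in>V. P x b a \<longleftrightarrow> \<not> P x a b"
    using profile_flip[OF PR _ ab] by blast
  then have "\<not> (\<forall>x\<in>V. P x a b)" "\<not> (\<forall>x\<in>V. P x b a)"
    using i j by blast+
  then obtain u w where e: "{u, w} \<in> E" "\<forall>x\<in>side E {u, w} u. P x a b" "\<forall>x\<in>side E {u, w} w. P x b a"
    using SC ab \<open>a \<noteq> b\<close> unfolding single_crossing_wrt_def by blast
  have V: "graph_on V E" "connected_graph V E"
    using T unfolding is_tree_def by auto
  have "u \<in> V"
    using graph_on_edgeD[OF V(1) e(1)] by blast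
  then have "x \<in> side E {u, w} u \<or> x \<in> side E {u, w} w" if "x \<in> V" for x
    using side_cover[OF V(2) e(1)] that by blast
  with e flip show ?thesis
    by (intro that[OF e(1)]) auto
qed

lemma single_crossing_not_between_leaf:
  assumes T: "is_tree V E" and SC: "single_crossing_wrt V A P E" and PR: "is_profile V A P"
    and V: "V = {x, y, z}" and nb: "\<not> between A P x y z"
  shows "\<exists>e\<in>E. y \<in> e \<and> side E e y = {y}"
proof -
  obtain a b where ab: "a \<in> A" "b \<in> A" "P x a b" "P z a b" "\<not> P y a b"
    using nb unfolding between_def by blast
  have "x \<in> V" "y \<in> V"
    using V by auto
  then obtain u w where e: "{u, w} \<in> E" "\<forall>i\<in>V. i \<in> side E {u, w} w \<longleftrightarrow> \<not> P i a b"
    using single_crossing_split_edge[OF T SC PR ab(1,2) _ ab(3) _ ab(5)] by metis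
  have G: "graph_on V E"
    using T unfolding is_tree_def by blast
  have "side E {u, w} w \<subseteq> {y}"
  proof
    fix i assume "i \<in> side E {u, w} w"
    then have "i \<in> {x, y, z}" "\<not> P i a b"
      using side_subset[OF G graph_on_edgeD(2)[OF G e(1)]] e(2) V by auto
    then show "i \<in> {y}"
      using ab(3,4) by auto
  qed
  then have "w = y"
    using side_self[of w E "{u, w}"] by blast
  with \<open>side E {u, w} w \<subseteq> {y}\<close> have "y \<in> {u, w} \<and> side E {u, w} y = {y}"
    using side_self[of y E "{u, w}"] by blast
  with e(1) show ?thesis ..
qed

lemma tree_three_voters_between:
  assumes PR: "is_profile {x, y, z} A P" and SC: "single_crossing_tree {x, y, z} A P"
  shows "between A P x y z \<or> between A P y x z \<or> between A P x z y"
proof (rule ccontr)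
  assume nb: "\<not> ?thesis"
  then have "x \<noteq> y" "y \<noteq> z" "x \<noteq> z"
    by (auto simp: between_def)
  obtain E where T: "is_tree {x, y, z} E" and SC: "single_crossing_wrt {x, y, z} A P E"
    using SC unfolding single_crossing_tree_def by blast
  have "{x, y, z} = {y, x, z}" "{x, y, z} = {x, z, y}"
    by auto
  then have "\<forall>v\<in>{x, y, z}. \<exists>e\<in>E. v \<in> e \<and> side E e v = {v}"
    using nb single_crossing_not_between_leaf[OF T SC PR] by (metis insertE singletonD)
  then have "card {x, y, z} \<le> 2"
    using tree_all_leaves_card[OF T] by blast
  with \<open>x \<noteq> y\<close> \<open>y \<noteq> z\<close> \<open>x \<noteq> z\<close> show False
    by simp
qed

lemma tree_single_crossing_no_square:
  assumes T: "is_tree V E" and SC: "single_crossing_wrt V A P E" and PR: "is_profile V A P"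
    and A: "a \<in> A" "b \<in> A" "c \<in> A" "d \<in> A" and X: "x1 \<in> V" "x2 \<in> V" "x3 \<in> V" "x4 \<in> V"
    and ab: "P x1 a b = P x2 a b" "P x3 a b = P x4 a b" "P x1 a b \<noteq> P x3 a b"
    and cd: "P x1 c d = P x3 c d" "P x2 c d = P x4 c d" "P x1 c d \<noteq> P x2 c d"
  shows False
proof -
  have split: "\<exists>u w. {u, w} \<in> E \<and> (\<forall>r\<in>{u, w}. \<exists>\<beta>. \<forall>x\<in>V. x \<in> side E {u, w} r \<longleftrightarrow> P x a' b' = \<beta>)"
    if h: "a' \<in> A" "b' \<in> A" "i \<in> V" "j \<in> V" "P i a' b' \<noteq> P j a' b'" for a' b' i j
  proof -
    obtain i' j' where "i' \<in> V" "P i' a' b'" "j' \<in> V" "\<not> P j' a' b'"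
      using h(3-5) by (cases "P i a' b'") blast+
    then obtain u w where "{u, w} \<in> E" "\<forall>x\<in>V. x \<in> side E {u, w} u \<longleftrightarrow> P x a' b' = True"
      "\<forall>x\<in>V. x \<in> side E {u, w} w \<longleftrightarrow> P x a' b' = False"
      using single_crossing_split_edge[OF T SC PR h(1,2)] by (metis (full_types))
    then show ?thesis by blast
  qed
  obtain u w where e: "{u, w} \<in> E" "\<forall>r\<in>{u, w}. \<exists>\<beta>. \<forall>x\<in>V. x \<in> side E {u, w} r \<longleftrightarrow> P x a b = \<beta>"
    using split[OF A(1,2) X(1,3) ab(3)] by blast
  obtain u' w' where e': "{u', w'} \<in> E" "\<forall>r\<in>{u', w'}. \<exists>\<gamma>. \<forall>x\<in>V. x \<in> side E {u', w'} r \<longleftrightarrow> P x c d = \<gamma>"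
    using split[OF A(3,4) X(1,2) cd(3)] by blast
  obtain r r' where r: "r \<in> {u, w}" "r' \<in> {u', w'}"
    and disj: "side E {u, w} r \<inter> side E {u', w'} r' = {}"
    using tree_sides_cross_free[OF T e(1) e'(1)] by blast
  obtain \<beta> where "\<forall>x\<in>V. x \<in> side E {u, w} r \<longleftrightarrow> P x a b = \<beta>"
    using bspec[OF e(2) r(1)] ..
  moreover obtain \<gamma> where "\<forall>x\<in>V. x \<in> side E {u', w'} r' \<longleftrightarrow> P x c d = \<gamma>"
    using bspec[OF e'(2) r(2)] ..
  moreover have "\<exists>x\<in>{x1, x2, x3, x4}. P x a b = \<beta> \<and> P x c d = \<gamma>"
    using ab cd by (cases \<beta>; cases \<gamma>; cases "P x1 a b"; cases "P x1 c d") auto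
  ultimately show False
    using disj X by blast
qed

section \<open>Disagreement sets\<close>

definition disagreements :: "'p set \<Rightarrow> ('v \<Rightarrow> 'p \<Rightarrow> bool) \<Rightarrow> 'v \<Rightarrow> 'v \<Rightarrow> 'p set" where
  "disagreements Q F x y = {p \<in> Q. F x p \<noteq> F y p}"

lemma disagreements_commute: "disagreements Q F x y = disagreements Q F y x"
  unfolding disagreements_def by auto

lemma disagreements_self [simp]: "disagreements Q F x x = {}"
  unfolding disagreements_def by auto

lemma finite_disagreements: "finite Q \<Longrightarrow> finite (disagreements Q F x y)"
  unfolding disagreements_def by simp

lemma disagreements_mono_between:
  assumes "disagreements Q F v x \<subseteq> disagreements Q F v y" "disagreements Q F v y \<subseteq> disagreements Q F v z"
  shows "disagreements Q F x y \<subseteq> disagreements Q F x z"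
  using assms unfolding disagreements_def by blast

lemma farthest_pair_disagreements:
  fixes Q :: "'p set" and F :: "'v \<Rightarrow> 'p \<Rightarrow> bool"
  defines "D \<equiv> disagreements Q F"
  assumes "finite Q"
    and betw: "\<forall>x\<in>V. \<forall>y\<in>V. \<forall>z\<in>V. D x y \<subseteq> D x z \<or> D y x \<subseteq> D y z \<or> D x z \<subseteq> D x y"
    and far: "\<forall>x\<in>V. \<forall>y\<in>V. card (D x y) \<le> card (D v w)"
    and V: "v \<in> V" "w \<in> V" "i \<in> V"
  shows "D v i \<subseteq> D v w"
proof -
  have fin: "finite (D x y)" for x y
    using finite_disagreements[OF \<open>finite Q\<close>] by (simp add: D_def)
  consider "D v w \<subseteq> D v i" | "D w v \<subseteq> D w i" | "D v i \<subseteq> D v w"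
    using betw V by blast
  then show ?thesis
  proof cases
    case 1
    then show ?thesis
      using card_seteq[OF fin 1] far V by simp
  next
    case 2
    have "card (D w i) \<le> card (D w v)"
      using far V disagreements_commute[of Q F v w] by (simp add: D_def)
    then have "D w v = D w i"
      using card_seteq[OF fin 2] by simp
    then have "D v i = {}"
      unfolding D_def disagreements_def by (auto simp: set_eq_iff)
    then show ?thesis by simp
  qed
qed

lemma ex_maximal_pair:
  fixes f :: "'v \<Rightarrow> 'v \<Rightarrow> 'b::linorder"
  assumes "finite V" "V \<noteq> {}"
  obtains v w where "v \<in> V" "w \<in> V" "\<forall>x\<in>V. \<forall>y\<in>V. f x y \<le> f v w"
proof -
  have fin: "finite (V \<times> V)" and "V \<times> V \<noteq> {}"
    using assms by auto
  then obtain vw where vw: "vw \<in> V \<times> V" "Max (case_prod f ` (V \<times> V)) = case_prod f vw"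
    by (rule obtains_MAX)
  then obtain v w where "v \<in> V" "w \<in> V" "Max (case_prod f ` (V \<times> V)) = f v w"
    by auto
  moreover have "f x y \<le> Max (case_prod f ` (V \<times> V))" if "x \<in> V" "y \<in> V" for x y
    using fin that by (intro Max_ge) auto
  ultimately show ?thesis
    using that by auto
qed

lemma ex_disagreements_chain:
  fixes Q :: "'p set" and F :: "'v \<Rightarrow> 'p \<Rightarrow> bool"
  defines "D \<equiv> disagreements Q F"
  assumes "finite V" "V \<noteq> {}" "finite Q"
    and betw: "\<forall>x\<in>V. \<forall>y\<in>V. \<forall>z\<in>V. D x y \<subseteq> D x z \<or> D y x \<subseteq> D y z \<or> D x z \<subseteq> D x y"
    and no_square: "\<forall>p\<in>Q. \<forall>q\<in>Q. \<forall>x1\<in>V. \<forall>x2\<in>V. \<forall>x3\<in>V. \<forall>x4\<in>V.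
      \<not> (F x1 p = F x2 p \<and> F x3 p = F x4 p \<and> F x1 p \<noteq> F x3 p
         \<and> F x1 q = F x3 q \<and> F x2 q = F x4 q \<and> F x1 q \<noteq> F x2 q)"
  shows "\<exists>v\<in>V. \<forall>i\<in>V. \<forall>j\<in>V. D v i \<subseteq> D v j \<or> D v j \<subseteq> D v i"
proof -
  \<comment> \<open>one end of a pair at maximal distance is an end of the whole family\<close>
  obtain v w where V: "v \<in> V" "w \<in> V" and far: "\<forall>x\<in>V. \<forall>y\<in>V. card (D x y) \<le> card (D v w)"
    using ex_maximal_pair[OF assms(2,3), of "\<lambda>x y. card (D x y)"] by blast
  have below: "D v i \<subseteq> D v w" if "i \<in> V" for i
    using farthest_pair_disagreements[OF assms(4) betw[unfolded D_def] far[unfolded D_def] V that]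
    by (simp add: D_def)
  have "D v i \<subseteq> D v j \<or> D v j \<subseteq> D v i" if ij: "i \<in> V" "j \<in> V" for i j
  proof (rule ccontr)
    assume "\<not> ?thesis"
    then obtain s t where s: "s \<in> D v i" "s \<notin> D v j" and t: "t \<in> D v j" "t \<notin> D v i"
      by blast
    moreover have "s \<in> D v w" "t \<in> D v w"
      using below ij s t by blast+
    ultimately have "s \<in> Q" "t \<in> Q" "F v s = F j s" "F i s = F w s" "F v s \<noteq> F i s"
      "F v t = F i t" "F j t = F w t" "F v t \<noteq> F j t"
      unfolding D_def disagreements_def by auto
    then show False
      \<comment> \<open>v, j, i, w form a square on s and t\<close>
      using no_square V ij by blast
  qed
  with V show ?thesis by blast
qed

section \<open>Paths\<close>

lemma ex_sorted_enumeration: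
  fixes f :: "'v \<Rightarrow> 'b::linorder"
  assumes "finite W"
  shows "\<exists>(n::nat) g. bij_betw g {..<n} W \<and> (\<forall>i j. i \<le> j \<longrightarrow> j < n \<longrightarrow> f (g i) \<le> f (g j))"
  using assms
proof (induction W rule: finite_ranking_induct[where f = f])
  case empty
  show ?case
    by (rule exI[where x = 0]) (simp add: bij_betw_def)
next
  case (insert x S)
  show ?case
  proof (cases "x \<in> S")
    case True
    with insert.IH show ?thesis
      by (simp add: insert_absorb)
  next
    case False
    obtain n :: nat and g where g: "bij_betw g {..<n} S" and mono: "\<forall>i j. i \<le> j \<longrightarrow> j < n \<longrightarrow> f (g i) \<le> f (g j)"
      using insert.IH by blast
    have "bij_betw (g(n := x)) {..<n} S"
      using g by (rule bij_betw_cong[THEN iffD1, rotated]) simp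
    then have "bij_betw (g(n := x)) ({..<n} \<union> {n}) (S \<union> {x})"
      using False by (intro bij_betw_combine) (auto simp: bij_betw_def)
    then have "bij_betw (g(n := x)) {..<Suc n} (insert x S)"
      by (simp add: lessThan_Suc)
    moreover have "f ((g(n := x)) i) \<le> f ((g(n := x)) j)" if "i \<le> j" "j < Suc n" for i j
    proof (cases "j = n")
      case True
      have "i < n \<Longrightarrow> g i \<in> S"
        using g by (auto simp: bij_betw_def)
      with True \<open>i \<le> j\<close> insert.hyps(2) show ?thesis
        by (cases "i = n") auto
    next
      case False
      with that mono show ?thesis by simp
    qed
    ultimately show ?thesis by blast
  qed
qed

definition path_edges :: "(nat \<Rightarrow> 'v) \<Rightarrow> nat \<Rightarrow> 'v set set" where
  "path_edges g n = {{g j, g (Suc j)} | j. Suc j < n}"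

lemma is_line_iff: "is_line V E \<longleftrightarrow> (\<exists>g n. bij_betw g {..<n} V \<and> E = path_edges g n)"
  by (simp add: is_line_def path_edges_def)

lemma side_path_edges_level:
  assumes inj: "inj_on g {..<n}" and j: "Suc j < n"
    and "x \<in> side (path_edges g n) {g j, g (Suc j)} r"
  shows "x \<in> g ` {..j} \<longleftrightarrow> r \<in> g ` {..j}"
proof -
  have "(r, x) \<in> (adj (path_edges g n - {{g j, g (Suc j)}}))\<^sup>*"
    using assms(3) by (simp add: side_def)
  then show ?thesis
  proof (induction rule: rtrancl_induct)
    case base
    then show ?case ..
  next
    case (step y z)
    then obtain m where m: "Suc m < n" "{y, z} = {g m, g (Suc m)}" "m \<noteq> j"
      by (auto simp: adj_def path_edges_def)
    \<comment> \<open>an edge other than the j-th one has both ends at most j or both ends beyond j\<close>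
    have level: "g k \<in> g ` {..j} \<longleftrightarrow> k \<le> j" if "k < n" for k
      using inj that j by (auto dest: inj_onD)
    have "y \<in> g ` {..j} \<longleftrightarrow> z \<in> g ` {..j}"
      using m level[of m] level[of "Suc m"] by (auto simp: doubleton_eq_iff)
    with step.IH show ?case by simp
  qed
qed

lemma path_edges_connected:
  assumes "k < n"
  shows "(g 0, g k) \<in> (adj (path_edges g n))\<^sup>*"
  using assms
proof (induction k)
  case 0
  then show ?case by simp
next
  case (Suc k)
  then have "(g k, g (Suc k)) \<in> adj (path_edges g n)"
    by (auto simp: adj_def path_edges_def)
  with Suc show ?case
    by (meson Suc_lessD rtrancl.rtrancl_into_rtrancl)
qed

lemma is_tree_path_edges:
  assumes bij: "bij_betw g {..<n} V"
  shows "is_tree V (path_edges g n)"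
proof -
  have inj: "inj_on g {..<n}" and im: "g ` {..<n} = V"
    using bij by (auto simp: bij_betw_def)
  have "g j \<noteq> g (Suc j)" if "Suc j < n" for j
    using inj that by (metis Suc_lessD inj_onD lessThan_iff n_not_Suc_n)
  then have "graph_on V (path_edges g n)"
    unfolding graph_on_def path_edges_def using im by auto
  moreover have "connected_graph V (path_edges g n)"
    unfolding connected_graph_def
  proof (intro ballI)
    fix u w assume "u \<in> V" "w \<in> V"
    then obtain i k where "i < n" "k < n" "u = g i" "w = g k"
      using im by auto
    then show "(u, w) \<in> (adj (path_edges g n))\<^sup>*"
      using adj_rtrancl_sym[OF path_edges_connected[of i]] path_edges_connected[of k]
      by (blast intro: rtrancl_trans)
  qed
  moreover have "(u, w) \<notin> (adj (path_edges g n - {{u, w}}))\<^sup>*" if uw: "{u, w} \<in> path_edges g n" for u w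
  proof
    assume "(u, w) \<in> (adj (path_edges g n - {{u, w}}))\<^sup>*"
    moreover obtain j where j: "Suc j < n" "{u, w} = {g j, g (Suc j)}"
      using uw unfolding path_edges_def by blast
    ultimately have "w \<in> side (path_edges g n) {g j, g (Suc j)} u"
      by (simp add: side_def)
    then have "w \<in> g ` {..j} \<longleftrightarrow> u \<in> g ` {..j}"
      using side_path_edges_level[OF inj j(1)] by blast
    moreover have "g j \<in> g ` {..j}" "g (Suc j) \<notin> g ` {..j}"
      using inj j(1) by (auto dest: inj_onD)
    ultimately show False
      using j(2) by (auto simp: doubleton_eq_iff)
  qed
  ultimately show ?thesis
    unfolding is_tree_def by blast
qed

lemma side_path_edges:
  assumes bij: "bij_betw g {..<n} V" and j: "Suc j < n"
  shows "side (path_edges g n) {g j, g (Suc j)} (g j) = g ` {..j}"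
    and "side (path_edges g n) {g j, g (Suc j)} (g (Suc j)) = g ` {Suc j..<n}"
proof -
  have inj: "inj_on g {..<n}" and im: "g ` {..<n} = V"
    using bij by (auto simp: bij_betw_def)
  have T: "is_tree V (path_edges g n)"
    using is_tree_path_edges[OF bij] .
  have e: "{g j, g (Suc j)} \<in> path_edges g n"
    using j by (auto simp: path_edges_def)
  have "g ` {..j} = g ` ({..<n} - {Suc j..<n})"
    using j by (intro arg_cong[where f = "image g"]) auto
  also have "\<dots> = V - g ` {Suc j..<n}"
    by (subst inj_on_image_set_diff[OF inj]) (auto simp: im)
  finally have lower: "g ` {..j} = V - g ` {Suc j..<n}" .
  have "g j \<in> g ` {..j}" "g (Suc j) \<notin> g ` {..j}"
    using inj j by (auto dest: inj_onD)
  then have "side (path_edges g n) {g j, g (Suc j)} (g j) \<subseteq> g ` {..j}"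
    "side (path_edges g n) {g j, g (Suc j)} (g (Suc j)) \<inter> g ` {..j} = {}"
    using side_path_edges_level[OF inj j] by blast+
  moreover have "side (path_edges g n) {g j, g (Suc j)} (g (Suc j))
      = V - side (path_edges g n) {g j, g (Suc j)} (g j)"
    using tree_side_complement[OF T e] .
  ultimately show "side (path_edges g n) {g j, g (Suc j)} (g j) = g ` {..j}"
    and "side (path_edges g n) {g j, g (Suc j)} (g (Suc j)) = g ` {Suc j..<n}"
    using lower im by auto
qed

section \<open>Single-crossing profiles on paths\<close>

definition initial_or_final_segment :: "(nat \<Rightarrow> bool) \<Rightarrow> nat \<Rightarrow> bool" where
  "initial_or_final_segment Q n \<longleftrightarrow> (\<exists>m\<le>n. (\<forall>k<n. Q k \<longleftrightarrow> k < m) \<or> (\<forall>k<n. Q k \<longleftrightarrow> m \<le> k))"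

lemma initial_or_final_segmentI:
  "m \<le> n \<Longrightarrow> (\<forall>k<n. Q k \<longleftrightarrow> k < m) \<or> (\<forall>k<n. Q k \<longleftrightarrow> m \<le> k) \<Longrightarrow> initial_or_final_segment Q n"
  unfolding initial_or_final_segment_def by blast

lemma convex_initial_segment:
  fixes Q :: "nat \<Rightarrow> bool"
  assumes "Q 0" and convex: "\<forall>i j k. i < j \<longrightarrow> j < k \<longrightarrow> k < n \<longrightarrow> Q i \<longrightarrow> Q k \<longrightarrow> Q j"
  shows "\<exists>m\<le>n. \<forall>k<n. Q k \<longleftrightarrow> k < m"
proof -
  define m where "m = (LEAST k. n \<le> k \<or> \<not> Q k)"
  have "m \<le> n"
    unfolding m_def by (rule Least_le) simp
  have "n \<le> m \<or> \<not> Q m"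
    unfolding m_def by (rule LeastI[of _ n]) simp
  have "Q k" if "k < m" for k
    using not_less_Least[OF that[unfolded m_def]] \<open>m \<le> n\<close> that by simp
  moreover have "\<not> Q k" if "m \<le> k" "k < n" for k
  proof
    assume "Q k"
    with \<open>n \<le> m \<or> \<not> Q m\<close> that have "\<not> Q m" "m < k"
      by (auto simp: le_less)
    moreover from \<open>\<not> Q m\<close> \<open>Q 0\<close> have "0 < m"
      by (cases m) auto
    ultimately show False
      using convex \<open>Q 0\<close> \<open>Q k\<close> \<open>k < n\<close>
      by blast
  qed
  ultimately show ?thesis
    using \<open>m \<le> n\<close> by (metis not_le)
qed

lemma convex_initial_or_final_segment:
  assumes "\<forall>i j k. i < j \<longrightarrow> j < k \<longrightarrow> k < n \<longrightarrow> Q i \<longrightarrow> Q k \<longrightarrow> Q j"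
    and "\<forall>i j k. i < j \<longrightarrow> j < k \<longrightarrow> k < n \<longrightarrow> \<not> Q i \<longrightarrow> \<not> Q k \<longrightarrow> \<not> Q j"
  shows "initial_or_final_segment Q n"
proof (cases "Q 0")
  case True
  then show ?thesis
    using convex_initial_segment[OF True assms(1)] unfolding initial_or_final_segment_def by blast
next
  case False
  then obtain m where "m \<le> n" "\<forall>k<n. \<not> Q k \<longleftrightarrow> k < m"
    using convex_initial_segment[of "\<lambda>k. \<not> Q k", OF False assms(2)] by blast
  then show ?thesis
    unfolding initial_or_final_segment_def by (metis not_le)
qed

lemma initial_or_final_segment_iff:
  "initial_or_final_segment Q n \<longleftrightarrow>
    (\<exists>m. 0 < m \<and> m < n \<and> ((\<forall>k<n. Q k \<longleftrightarrow> k < m) \<or> (\<forall>k<n. Q k \<longleftrightarrow> m \<le> k)))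
    \<or> (\<forall>k<n. Q k) \<or> (\<forall>k<n. \<not> Q k)"
proof
  assume "initial_or_final_segment Q n"
  then obtain m where m: "m \<le> n" "(\<forall>k<n. Q k \<longleftrightarrow> k < m) \<or> (\<forall>k<n. Q k \<longleftrightarrow> m \<le> k)"
    unfolding initial_or_final_segment_def by blast
  show "(\<exists>m. 0 < m \<and> m < n \<and> ((\<forall>k<n. Q k \<longleftrightarrow> k < m) \<or> (\<forall>k<n. Q k \<longleftrightarrow> m \<le> k)))
    \<or> (\<forall>k<n. Q k) \<or> (\<forall>k<n. \<not> Q k)"
  proof (cases "0 < m \<and> m < n")
    case True
    with m(2) show ?thesis by blast
  next
    case False
    with m(1) have "m = 0 \<or> m = n" by auto
    with m(2) show ?thesis by auto
  qed
next
  assume "(\<exists>m. 0 < m \<and> m < n \<and> ((\<forall>k<n. Q k \<longleftrightarrow> k < m) \<or> (\<forall>k<n. Q k \<longleftrightarrow> m \<le> k)))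
    \<or> (\<forall>k<n. Q k) \<or> (\<forall>k<n. \<not> Q k)"
  then consider (cut) m where "m < n" "(\<forall>k<n. Q k \<longleftrightarrow> k < m) \<or> (\<forall>k<n. Q k \<longleftrightarrow> m \<le> k)"
    | (all) "\<forall>k<n. Q k" | (none) "\<forall>k<n. \<not> Q k"
    by blast
  then show "initial_or_final_segment Q n"
  proof cases
    case (cut m)
    then show ?thesis by (intro initial_or_final_segmentI[of m]) auto
  next
    case all
    then show ?thesis by (intro initial_or_final_segmentI[of n]) auto
  next
    case none
    then show ?thesis by (intro initial_or_final_segmentI[of 0]) auto
  qed
qed

lemma initial_or_final_segment_convex:
  assumes "initial_or_final_segment Q n" "i < j" "j < k" "k < n" "Q i" "Q k"
  shows "Q j"
  using assms unfolding initial_or_final_segment_def by force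

lemma path_edge_sides_iff:
  assumes bij: "bij_betw g {..<n} V" and flip: "\<And>k. k < n \<Longrightarrow> P (g k) b a \<longleftrightarrow> \<not> P (g k) a b"
  shows "(\<exists>u w. {u, w} \<in> path_edges g n
            \<and> (\<forall>i\<in>side (path_edges g n) {u, w} u. P i a b) \<and> (\<forall>i\<in>side (path_edges g n) {u, w} w. P i b a))
    \<longleftrightarrow> (\<exists>m. 0 < m \<and> m < n \<and> ((\<forall>k<n. P (g k) a b \<longleftrightarrow> k < m) \<or> (\<forall>k<n. P (g k) a b \<longleftrightarrow> m \<le> k)))"
    (is "?edge \<longleftrightarrow> ?cut")
proof -
  let ?side = "side (path_edges g n)"
  have cut: "(\<forall>i\<in>?side {g j, g (Suc j)} (g j). P i a b) \<and> (\<forall>i\<in>?side {g j, g (Suc j)} (g (Suc j)). P i b a)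
        \<longleftrightarrow> (\<forall>k<n. P (g k) a b \<longleftrightarrow> k < Suc j)"
    "(\<forall>i\<in>?side {g j, g (Suc j)} (g (Suc j)). P i a b) \<and> (\<forall>i\<in>?side {g j, g (Suc j)} (g j). P i b a)
        \<longleftrightarrow> (\<forall>k<n. P (g k) a b \<longleftrightarrow> Suc j \<le> k)"
    if "Suc j < n" for j
    using side_path_edges[OF bij that] flip that by (auto simp: not_less_eq_eq)
  show ?thesis
  proof
    assume ?edge
    then obtain u w j where uw: "{u, w} = {g j, g (Suc j)}" "Suc j < n"
      and sides: "\<forall>i\<in>?side {u, w} u. P i a b" "\<forall>i\<in>?side {u, w} w. P i b a"
      unfolding path_edges_def by blast
    from uw(1) have "u = g j \<and> w = g (Suc j) \<or> u = g (Suc j) \<and> w = g j"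
      by (auto simp: doubleton_eq_iff)
    with sides uw cut[OF uw(2)] show ?cut
      by (intro exI[of _ "Suc j"]) auto
  next
    assume ?cut
    then obtain j where j: "Suc j < n"
      and "(\<forall>k<n. P (g k) a b \<longleftrightarrow> k < Suc j) \<or> (\<forall>k<n. P (g k) a b \<longleftrightarrow> Suc j \<le> k)"
      by (metis gr0_conv_Suc)
    then consider "(\<forall>i\<in>?side {g j, g (Suc j)} (g j). P i a b) \<and> (\<forall>i\<in>?side {g j, g (Suc j)} (g (Suc j)). P i b a)"
      | "(\<forall>i\<in>?side {g (Suc j), g j} (g (Suc j)). P i a b) \<and> (\<forall>i\<in>?side {g (Suc j), g j} (g j). P i b a)"
      using cut[OF j] by (auto simp: insert_commute)
    moreover have "{g j, g (Suc j)} \<in> path_edges g n" "{g (Suc j), g j} \<in> path_edges g n"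
      using j unfolding path_edges_def by (auto simp: insert_commute)
    ultimately show ?edge
      by cases blast+
  qed
qed

lemma single_crossing_path_iff:
  assumes bij: "bij_betw g {..<n} V" and PR: "is_profile V A P"
  shows "single_crossing_wrt V A P (path_edges g n)
    \<longleftrightarrow> (\<forall>a\<in>A. \<forall>b\<in>A. a \<noteq> b \<longrightarrow> initial_or_final_segment (\<lambda>k. P (g k) a b) n)"
proof -
  have im: "g ` {..<n} = V"
    using bij by (auto simp: bij_betw_def)
  have "((\<exists>u w. {u, w} \<in> path_edges g n \<and> (\<forall>i\<in>side (path_edges g n) {u, w} u. P i a b)
          \<and> (\<forall>i\<in>side (path_edges g n) {u, w} w. P i b a)) \<or> (\<forall>i\<in>V. P i a b) \<or> (\<forall>i\<in>V. P i b a))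
      \<longleftrightarrow> initial_or_final_segment (\<lambda>k. P (g k) a b) n"
    if ab: "a \<in> A" "b \<in> A" "a \<noteq> b" for a b
  proof -
    have flip: "P (g k) b a \<longleftrightarrow> \<not> P (g k) a b" if "k < n" for k
      using profile_flip[OF PR _ ab] im that by blast
    moreover have "(\<forall>i\<in>V. P i a b) \<longleftrightarrow> (\<forall>k<n. P (g k) a b)" "(\<forall>i\<in>V. P i b a) \<longleftrightarrow> (\<forall>k<n. \<not> P (g k) a b)"
      using im flip by auto
    ultimately show ?thesis
      unfolding initial_or_final_segment_iff
      using path_edge_sides_iff[where P = P and a = a and b = b, OF bij] by simp
  qed
  then show ?thesis
    unfolding single_crossing_wrt_def by blast
qed

abbreviation pref_disagreements :: "'a set \<Rightarrow> ('v \<Rightarrow> 'a \<Rightarrow> 'a \<Rightarrow> bool) \<Rightarrow> 'v \<Rightarrow> 'v \<Rightarrow> ('a \<times> 'a) set" where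
  "pref_disagreements A P \<equiv> disagreements (A \<times> A) (\<lambda>i (a, b). P i a b)"

lemma between_iff_disagreements_subset:
  assumes PR: "is_profile V A P" and V: "x \<in> V" "y \<in> V" "z \<in> V"
  shows "between A P x y z \<longleftrightarrow> pref_disagreements A P x y \<subseteq> pref_disagreements A P x z"
proof
  assume betw: "between A P x y z"
  show "pref_disagreements A P x y \<subseteq> pref_disagreements A P x z"
  proof
    fix p assume "p \<in> pref_disagreements A P x y"
    then obtain a b where p: "p = (a, b)" "a \<in> A" "b \<in> A" "P x a b \<noteq> P y a b"
      by (auto simp: disagreements_def)
    then have "a \<noteq> b"
      using profile_irrefl[OF PR V(1)] profile_irrefl[OF PR V(2)] by blast
    then have "P x b a \<longleftrightarrow> \<not> P x a b" "P y b a \<longleftrightarrow> \<not> P y a b" "P z b a \<longleftrightarrow> \<not> P z a b"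
      using profile_flip[OF PR _ p(2,3)] V by blast+
    with betw p(2-4) have "P x a b \<noteq> P z a b"
      unfolding between_def by (cases "P x a b") blast+
    with p(1-3) show "p \<in> pref_disagreements A P x z"
      by (simp add: disagreements_def)
  qed
next
  assume "pref_disagreements A P x y \<subseteq> pref_disagreements A P x z"
  then show "between A P x y z"
    unfolding between_def disagreements_def by blast
qed

lemma single_crossing_path_between:
  assumes bij: "bij_betw g {..<n} V" and PR: "is_profile V A P"
    and SC: "single_crossing_wrt V A P (path_edges g n)" and ijk: "i < j" "j < k" "k < n"
  shows "between A P (g i) (g j) (g k)"
  unfolding between_def
proof (intro ballI impI)
  fix a b assume ab: "a \<in> A" "b \<in> A" "P (g i) a b \<and> P (g k) a b"
  have "g i \<in> V"
    using bij ijk by (auto simp: bij_betw_def)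
  then have "a \<noteq> b"
    using profile_irrefl[OF PR _ ab(1)] ab(3) by blast
  then have "initial_or_final_segment (\<lambda>k. P (g k) a b) n"
    using SC single_crossing_path_iff[OF bij PR] ab(1,2) by blast
  from initial_or_final_segment_convex[OF this ijk] ab(3) show "P (g j) a b"
    by simp
qed

lemma between_single_crossing_path:
  assumes bij: "bij_betw g {..<n} V" and PR: "is_profile V A P"
    and betw: "\<forall>i j k. i < j \<longrightarrow> j < k \<longrightarrow> k < n \<longrightarrow> between A P (g i) (g j) (g k)"
  shows "single_crossing_wrt V A P (path_edges g n)"
  unfolding single_crossing_path_iff[OF bij PR]
proof (intro ballI impI convex_initial_or_final_segment)
  fix a b assume ab: "a \<in> A" "b \<in> A" "a \<noteq> b"
  have flip: "P (g k) b a \<longleftrightarrow> \<not> P (g k) a b" if "k < n" for k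
    using profile_flip[OF PR _ ab] bij that by (auto simp: bij_betw_def)
  show "\<forall>i j k. i < j \<longrightarrow> j < k \<longrightarrow> k < n \<longrightarrow> P (g i) a b \<longrightarrow> P (g k) a b \<longrightarrow> P (g j) a b"
    using betw ab(1,2) unfolding between_def by blast
  show "\<forall>i j k. i < j \<longrightarrow> j < k \<longrightarrow> k < n \<longrightarrow> \<not> P (g i) a b \<longrightarrow> \<not> P (g k) a b \<longrightarrow> \<not> P (g j) a b"
  proof (intro allI impI)
    fix i j k assume ijk: "i < j" "j < k" "k < n" and "\<not> P (g i) a b" "\<not> P (g k) a b"
    then have "P (g i) b a" "P (g k) b a"
      using flip by simp_all
    then have "P (g j) b a"
      using betw ijk ab(1,2) unfolding between_def by blast
    with flip ijk show "\<not> P (g j) a b"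
      by simp
  qed
qed

lemma single_crossing_line_if_disagreements_chain:
  assumes "finite U" "finite A" and PR: "is_profile U A P"
    and chain: "\<forall>x\<in>U. \<forall>y\<in>U. pref_disagreements A P v x \<subseteq> pref_disagreements A P v y
      \<or> pref_disagreements A P v y \<subseteq> pref_disagreements A P v x"
  shows "single_crossing_line U A P"
proof -
  let ?D = "pref_disagreements A P"
  obtain n :: nat and g where bij: "bij_betw g {..<n} U"
    and sorted: "\<forall>i j. i \<le> j \<longrightarrow> j < n \<longrightarrow> card (?D v (g i)) \<le> card (?D v (g j))"
    using ex_sorted_enumeration[OF \<open>finite U\<close>, of "\<lambda>x. card (?D v x)"] by blast
  have gU: "g i \<in> U" if "i < n" for i
    using bij that by (auto simp: bij_betw_def)
  have fin: "finite (?D v x)" for x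
    by (simp add: finite_disagreements \<open>finite A\<close>)
  \<comment> \<open>in a chain of finite sets, cardinality determines inclusion\<close>
  have mono: "?D v (g i) \<subseteq> ?D v (g j)" if "i \<le> j" "j < n" for i j
  proof -
    have "?D v (g i) \<subseteq> ?D v (g j) \<or> ?D v (g j) \<subseteq> ?D v (g i)"
      using chain gU that by simp
    moreover have "card (?D v (g i)) \<le> card (?D v (g j))"
      using sorted that by blast
    ultimately show ?thesis
      using card_seteq[OF fin] by blast
  qed
  have "between A P (g i) (g j) (g k)" if "i < j" "j < k" "k < n" for i j k
  proof -
    have "?D (g i) (g j) \<subseteq> ?D (g i) (g k)"
      using that by (intro disagreements_mono_between[OF mono mono]) simp_all
    then show ?thesis
      using between_iff_disagreements_subset[OF PR gU gU gU] that by simp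
  qed
  then have "single_crossing_wrt U A P (path_edges g n)"
    using between_single_crossing_path[OF bij PR] by blast
  with bij show ?thesis
    unfolding single_crossing_line_def is_line_iff by blast
qed

lemma single_crossing_line_imp_tree: "single_crossing_line V A P \<Longrightarrow> single_crossing_tree V A P"
  unfolding single_crossing_line_def single_crossing_tree_def is_line_iff
  using is_tree_path_edges by blast

lemma single_crossing_line_subprofile:
  assumes "finite V" "finite A" and PR: "is_profile V A P"
    and line: "single_crossing_line V A P" and "U \<subseteq> V"
  shows "single_crossing_line U A P"
proof -
  let ?D = "pref_disagreements A P"
  obtain g n where bij: "bij_betw g {..<n} V" and SC: "single_crossing_wrt V A P (path_edges g n)"
    using line unfolding single_crossing_line_def is_line_iff by blast
  have gV: "g i \<in> V" if "i < n" for i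
    using bij that by (auto simp: bij_betw_def)
  \<comment> \<open>the first voter on the line is an end\<close>
  have mono: "?D (g 0) (g i) \<subseteq> ?D (g 0) (g j)" if "i \<le> j" "j < n" for i j
  proof (cases "i = 0 \<or> i = j")
    case True
    then show ?thesis by auto
  next
    case False
    with that have "between A P (g 0) (g i) (g j)"
      using single_crossing_path_between[OF bij PR SC] by simp
    with that show ?thesis
      using between_iff_disagreements_subset[OF PR gV gV gV] by simp
  qed
  have chain: "\<forall>x\<in>U. \<forall>y\<in>U. ?D (g 0) x \<subseteq> ?D (g 0) y \<or> ?D (g 0) y \<subseteq> ?D (g 0) x"
  proof (intro ballI)
    fix x y assume "x \<in> U" "y \<in> U"
    with \<open>U \<subseteq> V\<close> have "x \<in> g ` {..<n}" "y \<in> g ` {..<n}"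
      using bij by (auto simp: bij_betw_def)
    then obtain i j where "i < n" "j < n" "x = g i" "y = g j"
      by blast
    then show "?D (g 0) x \<subseteq> ?D (g 0) y \<or> ?D (g 0) y \<subseteq> ?D (g 0) x"
      using mono by (cases "i \<le> j") auto
  qed
  have "finite U"
    using \<open>finite V\<close> \<open>U \<subseteq> V\<close> by (rule finite_subset[rotated])
  from single_crossing_line_if_disagreements_chain[OF this \<open>finite A\<close> is_profile_subset[OF PR \<open>U \<subseteq> V\<close>] chain]
  show ?thesis .
qed

lemma subprofiles_tree_ex_disagreements_chain:
  assumes "finite V" "V \<noteq> {}" "finite A" and PR: "is_profile V A P"
    and T: "is_tree V E" and SC: "single_crossing_wrt V A P E"
    and sub: "\<forall>U. U \<subseteq> V \<and> U \<noteq> {} \<longrightarrow> single_crossing_tree U A P"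
  shows "\<exists>v\<in>V. \<forall>x\<in>V. \<forall>y\<in>V. pref_disagreements A P v x \<subseteq> pref_disagreements A P v y
    \<or> pref_disagreements A P v y \<subseteq> pref_disagreements A P v x"
proof -
  define F where "F = (\<lambda>i (a, b). P i a b)"
  let ?D = "disagreements (A \<times> A) F"
  have "\<forall>x\<in>V. \<forall>y\<in>V. \<forall>z\<in>V. ?D x y \<subseteq> ?D x z \<or> ?D y x \<subseteq> ?D y z \<or> ?D x z \<subseteq> ?D x y"
    unfolding F_def
  proof (intro ballI)
    fix x y z assume V: "x \<in> V" "y \<in> V" "z \<in> V"
    then have "is_profile {x, y, z} A P" "single_crossing_tree {x, y, z} A P"
      using is_profile_subset[OF PR] sub by auto
    then have "between A P x y z \<or> between A P y x z \<or> between A P x z y"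
      by (rule tree_three_voters_between)
    then show "pref_disagreements A P x y \<subseteq> pref_disagreements A P x z
      \<or> pref_disagreements A P y x \<subseteq> pref_disagreements A P y z
      \<or> pref_disagreements A P x z \<subseteq> pref_disagreements A P x y"
      using between_iff_disagreements_subset[OF PR] V by blast
  qed
  moreover have "\<forall>p\<in>A \<times> A. \<forall>q\<in>A \<times> A. \<forall>x1\<in>V. \<forall>x2\<in>V. \<forall>x3\<in>V. \<forall>x4\<in>V.
      \<not> (F x1 p = F x2 p \<and> F x3 p = F x4 p \<and> F x1 p \<noteq> F x3 p
         \<and> F x1 q = F x3 q \<and> F x2 q = F x4 q \<and> F x1 q \<noteq> F x2 q)"
    unfolding F_def split_paired_Ball_Sigma prod.case
    by (intro ballI notI, elim conjE) (rule tree_single_crossing_no_square[OF T SC PR]; assumption)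
  moreover have "finite (A \<times> A)"
    using \<open>finite A\<close> by simp
  ultimately have "\<exists>v\<in>V. \<forall>x\<in>V. \<forall>y\<in>V. ?D v x \<subseteq> ?D v y \<or> ?D v y \<subseteq> ?D v x"
    using ex_disagreements_chain[OF assms(1,2)] by blast
  then show ?thesis
    unfolding F_def .
qed

theorem theorem5:
  fixes V :: "'v set" and A :: "'a set" and P :: "'v \<Rightarrow> 'a \<Rightarrow> 'a \<Rightarrow> bool"
  assumes "finite V" and "V \<noteq> {}" and "finite A"
    and "is_profile V A P"
    and "single_crossing_tree V A P"
  shows "(\<forall>U. U \<subseteq> V \<and> U \<noteq> {} \<longrightarrow> single_crossing_tree U A P)
         \<longleftrightarrow> single_crossing_line V A P"
proof
  assume sub: "\<forall>U. U \<subseteq> V \<and> U \<noteq> {} \<longrightarrow> single_crossing_tree U A P"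
  obtain E where T: "is_tree V E" and SC: "single_crossing_wrt V A P E"
    using assms(5) unfolding single_crossing_tree_def by blast
  obtain v where "\<forall>x\<in>V. \<forall>y\<in>V. pref_disagreements A P v x \<subseteq> pref_disagreements A P v y
      \<or> pref_disagreements A P v y \<subseteq> pref_disagreements A P v x"
    using subprofiles_tree_ex_disagreements_chain[OF assms(1-4) T SC sub] by blast
  then show "single_crossing_line V A P"
    by (rule single_crossing_line_if_disagreements_chain[OF assms(1,3,4)])
next
  assume line: "single_crossing_line V A P"
  show "\<forall>U. U \<subseteq> V \<and> U \<noteq> {} \<longrightarrow> single_crossing_tree U A P"
    using single_crossing_line_imp_tree single_crossing_line_subprofile[OF assms(1,3,4) line] by blast
qed

end
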